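(* Let $x_1,\dots,x_n\in K^\vee\setminus K$ and $t>0$, and let $\pi:K^\vee\to K^\vee/K$ be the canonical quotient map. Suppose $\{\pi(x_1),\dots,\pi(x_n)\}$ is an orthogonal set. Then the normed space $E=([1,x_1,\dots,x_n],|\cdot|_t)$ satisfies (SE) if and only if $t\notin V_K$.
   Context: $K$ is a complete non-archimedean non-trivially valued field which is not spherically complete, with valuation group $V_K=\{|x|:x\in K\setminus\{0\}\}$; $K^\vee$ is a fixed spherically complete immediate extension of $K$. $K^\vee/K$ carries the quotient norm $\inf_{a\in K}|z-a|$. $([1,x_1,\dots,x_n],|\cdot|_t)$ is the $K$-linear span of $1,x_1,\dots,x_n$ in $K^\vee$ with norm $|z|_t=t|z|$. A set $S\not\ni0$ is orthogonal if $\|\sum\lambda_is_i\|=\max\|\lambda_is_i\|$ for finitely many distinct $s_i\in S$, $\lambda_i\in K$. A normed space $E$ satisfies (SE) if for each subspace $D\subseteq E$ and each $f\in D'$ with $\|f\|=1$ there is an extension $\tilde f\in E'$ of $f$ with $\|\tilde f\|=1$ (operator norms). *)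

theory Defs
  imports Complex_Main
begin

text \<open>The ambient type 'a plays the role of the spherically complete immediate
extension K^v; the set K of elements of 'a is the base field K.\<close>

definition nonarch_abs :: "('a::field \<Rightarrow> real) \<Rightarrow> bool" where
  "nonarch_abs v \<longleftrightarrow> (\<forall>x. 0 \<le> v x) \<and> (\<forall>x. v x = 0 \<longleftrightarrow> x = 0)
     \<and> (\<forall>x y. v (x * y) = v x * v y) \<and> (\<forall>x y. v (x + y) \<le> max (v x) (v y))"

definition subfield :: "'a::field set \<Rightarrow> bool" where
  "subfield K \<longleftrightarrow> 0 \<in> K \<and> 1 \<in> K \<and> (\<forall>x\<in>K. \<forall>y\<in>K. x + y \<in> K \<and> x * y \<in> K)
     \<and> (\<forall>x\<in>K. - x \<in> K) \<and> (\<forall>x\<in>K. x \<noteq> 0 \<longrightarrow> inverse x \<in> K)"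

definition complete_in :: "'a::field set \<Rightarrow> ('a \<Rightarrow> real) \<Rightarrow> bool" where
  "complete_in K v \<longleftrightarrow> (\<forall>s. (\<forall>n. s n \<in> K) \<and>
       (\<forall>e>0. \<exists>N. \<forall>m\<ge>N. \<forall>k\<ge>N. v (s m - s k) < e)
       \<longrightarrow> (\<exists>l\<in>K. (\<lambda>k. v (s k - l)) \<longlonglongrightarrow> 0))"

definition nontrivially_valued :: "'a::field set \<Rightarrow> ('a \<Rightarrow> real) \<Rightarrow> bool" where
  "nontrivially_valued K v \<longleftrightarrow> (\<exists>a\<in>K. v a \<noteq> 0 \<and> v a \<noteq> 1)"

definition cball_in :: "'a::field set \<Rightarrow> ('a \<Rightarrow> real) \<Rightarrow> 'a \<Rightarrow> real \<Rightarrow> 'a set" where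
  "cball_in K v a r = {y \<in> K. v (y - a) \<le> r}"

definition sph_complete_in :: "'a::field set \<Rightarrow> ('a \<Rightarrow> real) \<Rightarrow> bool" where
  "sph_complete_in K v \<longleftrightarrow> (\<forall>a r. (\<forall>n. a n \<in> K \<and> r n > 0) \<and>
       (\<forall>n. cball_in K v (a (Suc n)) (r (Suc n)) \<subseteq> cball_in K v (a n) (r n))
       \<longrightarrow> (\<Inter>n. cball_in K v (a n) (r n)) \<noteq> {})"

definition value_group :: "'a::field set \<Rightarrow> ('a \<Rightarrow> real) \<Rightarrow> real set" where
  "value_group K v = {v a | a. a \<in> K \<and> a \<noteq> 0}"

text \<open>Immediate extension: same value group and same residue field.\<close>
definition immediate_ext :: "'a::field set \<Rightarrow> ('a \<Rightarrow> real) \<Rightarrow> bool" where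
  "immediate_ext K v \<longleftrightarrow> value_group UNIV v = value_group K v \<and>
       (\<forall>z. v z \<le> 1 \<longrightarrow> (\<exists>a\<in>K. v a \<le> 1 \<and> v (z - a) < 1))"

text \<open>Quotient norm on K^v/K, evaluated at a representative.\<close>
definition quot_norm :: "'a::field set \<Rightarrow> ('a \<Rightarrow> real) \<Rightarrow> 'a \<Rightarrow> real" where
  "quot_norm K v z = Inf {v (z - a) | a. a \<in> K}"

text \<open>The set {pi(x_1),...,pi(x_n)} is orthogonal in K^v/K: it does not contain 0, and for
  finitely many distinct elements pi(x_i) (i in I) and scalars lam_i in K,
  the quotient norm of the sum is the maximum of the quotient norms of the terms.\<close>
definition pi_orthogonal :: "'a::field set \<Rightarrow> ('a \<Rightarrow> real) \<Rightarrow> nat \<Rightarrow> (nat \<Rightarrow> 'a) \<Rightarrow> bool" where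
  "pi_orthogonal K v n x \<longleftrightarrow> (\<forall>i\<in>{1..n}. x i \<notin> K) \<and>
     (\<forall>I lam. I \<subseteq> {1..n} \<and> I \<noteq> {} \<and> (\<forall>i\<in>I. \<forall>j\<in>I. i \<noteq> j \<longrightarrow> x i - x j \<notin> K)
        \<and> (\<forall>i\<in>I. lam i \<in> K) \<longrightarrow>
        quot_norm K v (\<Sum>i\<in>I. lam i * x i) = Max ((\<lambda>i. quot_norm K v (lam i * x i)) ` I))"

definition kspan :: "'a::field set \<Rightarrow> nat \<Rightarrow> (nat \<Rightarrow> 'a) \<Rightarrow> 'a set" where
  "kspan K n x = {c 0 + (\<Sum>i=1..n. c i * x i) | c. \<forall>i\<in>{0..n}. c i \<in> K}"

definition ksubspace :: "'a::field set \<Rightarrow> 'a set \<Rightarrow> bool" where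
  "ksubspace K D \<longleftrightarrow> 0 \<in> D \<and> (\<forall>a\<in>D. \<forall>b\<in>D. a + b \<in> D) \<and> (\<forall>c\<in>K. \<forall>a\<in>D. c * a \<in> D)"

definition klinear_fun :: "'a::field set \<Rightarrow> 'a set \<Rightarrow> ('a \<Rightarrow> 'a) \<Rightarrow> bool" where
  "klinear_fun K D f \<longleftrightarrow> (\<forall>d\<in>D. f d \<in> K) \<and> (\<forall>a\<in>D. \<forall>b\<in>D. f (a + b) = f a + f b)
     \<and> (\<forall>c\<in>K. \<forall>a\<in>D. f (c * a) = c * f a)"

definition has_opnorm :: "('a \<Rightarrow> real) \<Rightarrow> ('a \<Rightarrow> real) \<Rightarrow> 'a set \<Rightarrow> ('a \<Rightarrow> 'a) \<Rightarrow> real \<Rightarrow> bool" where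
  "has_opnorm v N D f c \<longleftrightarrow> (\<forall>d\<in>D. v (f d) \<le> c * N d) \<and>
     (\<forall>c'. (\<forall>d\<in>D. v (f d) \<le> c' * N d) \<longrightarrow> c \<le> c')"

definition has_SE :: "'a::field set \<Rightarrow> ('a \<Rightarrow> real) \<Rightarrow> ('a \<Rightarrow> real) \<Rightarrow> 'a set \<Rightarrow> bool" where
  "has_SE K v N E \<longleftrightarrow> (\<forall>D f. ksubspace K D \<and> D \<subseteq> E \<and> klinear_fun K D f \<and> has_opnorm v N D f 1
     \<longrightarrow> (\<exists>g. klinear_fun K E g \<and> (\<forall>d\<in>D. g d = f d) \<and> has_opnorm v N E g 1))"

end

theory Submission
  imports Defs
begin

text \<open>If t = v a with a in K, the functional k \<mapsto> a * k on K has norm 1, and a norm-1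
  extension g to E would make g(x_j)/a a best approximation of x_j by elements of K; in an
  immediate extension no element outside K has one, because every w \<noteq> 0 satisfies
  v (w - c) < v w for some c in K.

  If t is not a value, a norm-1 functional f on D \<subseteq> E is extended one generator z (1 or
  some x_j) at a time, as in the Hahn-Banach argument; the new value b in K must satisfy
  v (b - f d) \<le> t * v (z - d) for all d in D. Orthogonality makes the quotient norm on E the
  maximum over the coordinates \<lambda>_j of v \<lambda>_j times the quotient norm of x_j, and a pivoting
  induction on the coordinates solves two extremal problems on D: a point nearest to z in the
  quotient norm (when 1 \<in> D), and a maximiser of the ratio of v d to its quotient norm (when
  1 \<notin> D). This yields a gap strictly below all distances v (z - d) within which z - d0 can
  be approximated along a line of D; as t is not a value, v (f u) \<le> t * v u is strict,
  which leaves room for b.\<close>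

locale nonarch_valuation =
  fixes v :: "'a::field \<Rightarrow> real"
  assumes nonarch: "nonarch_abs v"
begin

lemma v_nonneg [simp]: "0 \<le> v a"
  and v_eq_0_iff [simp]: "v a = 0 \<longleftrightarrow> a = 0"
  and v_mult: "v (a * b) = v a * v b"
  and v_add_le: "v (a + b) \<le> max (v a) (v b)"
  using nonarch unfolding nonarch_abs_def by auto

lemma v_0 [simp]: "v 0 = 0"
  by simp

lemma v_pos: "a \<noteq> 0 \<Longrightarrow> 0 < v a"
  using v_nonneg[of a] v_eq_0_iff[of a] by linarith

lemma v_one [simp]: "v 1 = 1"
  using v_mult[of 1 1] v_eq_0_iff[of 1] by (metis mult_cancel_right1 one_neq_zero)

lemma v_minus [simp]: "v (- a) = v a"
proof -
  have "(v (-1) - 1) * (v (-1) + 1) = 0"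
    using v_mult[of "-1" "-1"] by (simp add: algebra_simps)
  moreover have "v (-1) + 1 > 0" using v_nonneg[of "-1"] by linarith
  ultimately have "v (-1) = 1" by simp
  then show ?thesis using v_mult[of "-1" a] by simp
qed

lemma v_minus_commute: "v (a - b) = v (b - a)"
  by (metis minus_diff_eq v_minus)

lemma v_diff_le: "v (a - b) \<le> max (v a) (v b)"
  using v_add_le[of a "- b"] by simp

lemma v_diff_eq_left: "v b < v a \<Longrightarrow> v (a - b) = v a"
  using v_diff_le[of a b] v_add_le[of "a - b" b] by (auto simp: max_def split: if_splits)

lemma v_inverse: "v (inverse a) = inverse (v a)"
proof (cases "a = 0")
  case False
  then have "v a * v (inverse a) = 1" by (simp flip: v_mult)
  then show ?thesis by (rule inverse_unique[symmetric])
qed simp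

lemma v_divide: "v (a / b) = v a / v b"
  by (simp add: divide_inverse v_mult v_inverse)

end

locale base_field =
  fixes K :: "'a::field set"
  assumes subfield: "subfield K"
begin

lemma K_0 [simp]: "0 \<in> K"
  and K_1 [simp]: "1 \<in> K"
  and K_add: "a \<in> K \<Longrightarrow> b \<in> K \<Longrightarrow> a + b \<in> K"
  and K_mult: "a \<in> K \<Longrightarrow> b \<in> K \<Longrightarrow> a * b \<in> K"
  and K_uminus: "a \<in> K \<Longrightarrow> - a \<in> K"
  using subfield unfolding subfield_def by auto

lemma K_inverse: "a \<in> K \<Longrightarrow> inverse a \<in> K"
  using subfield unfolding subfield_def by (cases "a = 0") auto

lemma K_diff: "a \<in> K \<Longrightarrow> b \<in> K \<Longrightarrow> a - b \<in> K"
  using K_add K_uminus by (metis diff_conv_add_uminus)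

lemma K_divide: "a \<in> K \<Longrightarrow> b \<in> K \<Longrightarrow> a / b \<in> K"
  by (simp add: divide_inverse K_mult K_inverse)

lemma K_sum: "(\<And>i. i \<in> S \<Longrightarrow> f i \<in> K) \<Longrightarrow> sum f S \<in> K"
  by (induction S rule: infinite_finite_induct) (auto intro: K_add)

lemma ksubspace_0: "ksubspace K D \<Longrightarrow> 0 \<in> D"
  and ksubspace_add: "ksubspace K D \<Longrightarrow> a \<in> D \<Longrightarrow> b \<in> D \<Longrightarrow> a + b \<in> D"
  and ksubspace_scale: "ksubspace K D \<Longrightarrow> c \<in> K \<Longrightarrow> a \<in> D \<Longrightarrow> c * a \<in> D"
  unfolding ksubspace_def by blast+

lemma ksubspace_uminus: "ksubspace K D \<Longrightarrow> a \<in> D \<Longrightarrow> - a \<in> D"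
  using ksubspace_scale[of D "-1" a] K_uminus[OF K_1] by simp

lemma ksubspace_diff: "ksubspace K D \<Longrightarrow> a \<in> D \<Longrightarrow> b \<in> D \<Longrightarrow> a - b \<in> D"
  using ksubspace_add[of D a "- b"] ksubspace_uminus[of D b] by simp

lemma ksubspace_sum:
  assumes "ksubspace K D" "finite S" "\<And>i. i \<in> S \<Longrightarrow> g i \<in> D"
  shows "sum g S \<in> D"
  using assms(2,3) by induction (simp_all add: ksubspace_0 ksubspace_add assms(1))

lemma ksubspace_K: "ksubspace K K"
  unfolding ksubspace_def using K_add K_mult by simp

lemma klinear_in_K: "klinear_fun K D f \<Longrightarrow> d \<in> D \<Longrightarrow> f d \<in> K"
  and klinear_add: "klinear_fun K D f \<Longrightarrow> a \<in> D \<Longrightarrow> b \<in> D \<Longrightarrow> f (a + b) = f a + f b"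
  and klinear_scale: "klinear_fun K D f \<Longrightarrow> c \<in> K \<Longrightarrow> a \<in> D \<Longrightarrow> f (c * a) = c * f a"
  unfolding klinear_fun_def by blast+

lemma klinear_0: "ksubspace K D \<Longrightarrow> klinear_fun K D f \<Longrightarrow> f 0 = 0"
  using klinear_scale[of D f 0 0] ksubspace_0 by simp

lemma klinear_uminus: "ksubspace K D \<Longrightarrow> klinear_fun K D f \<Longrightarrow> a \<in> D \<Longrightarrow> f (- a) = - f a"
  using klinear_scale[of D f "-1" a] K_uminus[OF K_1] by simp

lemma klinear_diff:
  "ksubspace K D \<Longrightarrow> klinear_fun K D f \<Longrightarrow> a \<in> D \<Longrightarrow> b \<in> D \<Longrightarrow> f (a - b) = f a - f b"
  using klinear_add[of D f a "- b"] klinear_uminus[of D f b] ksubspace_uminus[of D b] by simp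

lemma ksubspace_kernel:
  assumes "ksubspace K D" "ksubspace K E" "D \<subseteq> E" "klinear_fun K E h"
  shows "ksubspace K {d \<in> D. h d = 0}"
  using assms klinear_0[OF assms(2,4)] klinear_add[OF assms(4)] klinear_scale[OF assms(4)]
  unfolding ksubspace_def by (auto simp: subset_iff)

lemma kspan_ksubspace: "ksubspace K (kspan K n x)"
  unfolding ksubspace_def kspan_def
proof (intro conjI ballI; (elim CollectE exE conjE)?; hypsubst?)
  show "0 \<in> {c 0 + (\<Sum>i=1..n. c i * x i) |c. \<forall>i\<in>{0..n}. c i \<in> K}"
    by (rule CollectI, rule exI[of _ "\<lambda>_. 0"]) simp
next
  fix c c' assume "\<forall>i\<in>{0..n}. c i \<in> K" "\<forall>i\<in>{0..n}. c' i \<in> K"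
  then show "c 0 + (\<Sum>i=1..n. c i * x i) + (c' 0 + (\<Sum>i=1..n. c' i * x i))
      \<in> {c 0 + (\<Sum>i=1..n. c i * x i) |c. \<forall>i\<in>{0..n}. c i \<in> K}"
    by (intro CollectI exI[of _ "\<lambda>i. c i + c' i"])
      (simp add: K_add distrib_right sum.distrib algebra_simps)
next
  fix a c assume "a \<in> K" "\<forall>i\<in>{0..n}. c i \<in> K"
  then show "a * (c 0 + (\<Sum>i=1..n. c i * x i))
      \<in> {c 0 + (\<Sum>i=1..n. c i * x i) |c. \<forall>i\<in>{0..n}. c i \<in> K}"
    by (intro CollectI exI[of _ "\<lambda>i. a * c i"])
      (simp add: K_mult distrib_left sum_distrib_left mult.assoc)
qed

lemma K_subset_kspan: "K \<subseteq> kspan K n x"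
  unfolding kspan_def by (force intro: exI[of _ "\<lambda>i. if i = 0 then _ else 0"])

lemma in_kspan:
  assumes "i \<in> {1..n}"
  shows "x i \<in> kspan K n x"
proof -
  have "(\<Sum>j=1..n. (if j = i then 1 else 0) * x j) = (\<Sum>j=1..n. if j = i then x j else 0)"
    by (rule sum.cong) simp_all
  then show ?thesis
    unfolding kspan_def using assms
    by (intro CollectI exI[of _ "\<lambda>j. if j = i then 1 else 0"]) simp
qed

definition span_insert :: "'a set \<Rightarrow> 'a \<Rightarrow> 'a set" where
  "span_insert D z = {d + m * z | d m. d \<in> D \<and> m \<in> K}"

lemma span_insert_ksubspace:
  assumes D: "ksubspace K D"
  shows "ksubspace K (span_insert D z)"
  unfolding ksubspace_def
proof (intro conjI ballI)
  show "0 \<in> span_insert D z"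
    unfolding span_insert_def using ksubspace_0[OF D] K_0 by force
next
  fix a b assume "a \<in> span_insert D z" "b \<in> span_insert D z"
  then obtain d1 m1 d2 m2 where "a = d1 + m1 * z" "b = d2 + m2 * z"
    and "d1 \<in> D" "m1 \<in> K" "d2 \<in> D" "m2 \<in> K"
    unfolding span_insert_def by blast
  moreover have "a + b = (d1 + d2) + (m1 + m2) * z"
    using calculation by (simp add: algebra_simps)
  ultimately show "a + b \<in> span_insert D z"
    unfolding span_insert_def using ksubspace_add[OF D] K_add by blast
next
  fix c a assume c: "c \<in> K" and "a \<in> span_insert D z"
  then obtain d m where "a = d + m * z" "d \<in> D" "m \<in> K"
    unfolding span_insert_def by blast
  moreover have "c * a = c * d + (c * m) * z"
    using calculation by (simp add: algebra_simps)
  ultimately show "c * a \<in> span_insert D z"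
    unfolding span_insert_def using ksubspace_scale[OF D c] K_mult[OF c] by blast
qed

lemma subset_span_insert: "D \<subseteq> span_insert D z"
  unfolding span_insert_def by force

lemma in_span_insert: "ksubspace K D \<Longrightarrow> z \<in> span_insert D z"
  unfolding span_insert_def using ksubspace_0[of D] by force

lemma span_insert_subset:
  "ksubspace K E \<Longrightarrow> D \<subseteq> E \<Longrightarrow> z \<in> E \<Longrightarrow> span_insert D z \<subseteq> E"
  unfolding span_insert_def using ksubspace_add ksubspace_scale by blast

lemma span_insert_coeff_unique:
  assumes D: "ksubspace K D" and z: "z \<notin> D" and "m1 \<in> K" "m2 \<in> K"
    and "w - m1 * z \<in> D" "w - m2 * z \<in> D"
  shows "m1 = m2"
proof (rule ccontr)
  assume ne: "m1 \<noteq> m2"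
  have "(m1 - m2) * z \<in> D"
    using ksubspace_diff[OF D assms(6,5)] by (simp add: algebra_simps)
  then have "inverse (m1 - m2) * ((m1 - m2) * z) \<in> D"
    using ksubspace_scale[OF D K_inverse[OF K_diff[OF assms(3,4)]]] by blast
  then show False using z ne by (simp flip: mult.assoc)
qed

lemma klinear_extension_span_insert:
  assumes D: "ksubspace K D" and f: "klinear_fun K D f" and z: "z \<notin> D" and b: "b \<in> K"
  obtains g where "klinear_fun K (span_insert D z) g"
    and "\<And>d m. d \<in> D \<Longrightarrow> m \<in> K \<Longrightarrow> g (d + m * z) = f d + m * b"
proof
  define mu where "mu w = (SOME m. m \<in> K \<and> w - m * z \<in> D)" for w
  define g where "g w = f (w - mu w * z) + mu w * b" for w
  have mu_eq: "mu (d + m * z) = m" if "d \<in> D" "m \<in> K" for d m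
  proof -
    have "m \<in> K \<and> (d + m * z) - m * z \<in> D" using that by simp
    moreover from this have "mu (d + m * z) \<in> K \<and> (d + m * z) - mu (d + m * z) * z \<in> D"
      unfolding mu_def by (rule someI)
    ultimately show ?thesis using span_insert_coeff_unique[OF D z] by blast
  qed
  show g_eq: "g (d + m * z) = f d + m * b" if "d \<in> D" "m \<in> K" for d m
    unfolding g_def using mu_eq[OF that] by simp
  show "klinear_fun K (span_insert D z) g"
    unfolding klinear_fun_def span_insert_def
  proof (intro conjI ballI; elim CollectE exE conjE; hypsubst)
    fix d m assume "d \<in> D" "m \<in> K"
    then show "g (d + m * z) \<in> K"
      using g_eq klinear_in_K[OF f] K_add K_mult[OF _ b] by simp
  next
    fix d1 m1 d2 m2 assume d: "d1 \<in> D" "m1 \<in> K" "d2 \<in> D" "m2 \<in> K"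
    have "d1 + m1 * z + (d2 + m2 * z) = (d1 + d2) + (m1 + m2) * z"
      by (simp add: algebra_simps)
    also have "g \<dots> = f (d1 + d2) + (m1 + m2) * b"
      using d by (intro g_eq ksubspace_add[OF D] K_add)
    finally show "g (d1 + m1 * z + (d2 + m2 * z)) = g (d1 + m1 * z) + g (d2 + m2 * z)"
      using d g_eq klinear_add[OF f] by (simp add: algebra_simps)
  next
    fix c d m assume d: "c \<in> K" "d \<in> D" "m \<in> K"
    have "c * (d + m * z) = c * d + (c * m) * z"
      by (simp add: algebra_simps)
    also have "g \<dots> = f (c * d) + (c * m) * b"
      using d by (intro g_eq ksubspace_scale[OF D] K_mult)
    finally show "g (c * (d + m * z)) = c * g (d + m * z)"
      using d g_eq klinear_scale[OF f] by (simp add: algebra_simps)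
  qed
qed

end

locale valued_base_field = nonarch_valuation v + base_field K
  for v :: "'a::field \<Rightarrow> real" and K :: "'a set"
begin

abbreviation qn :: "'a \<Rightarrow> real" where
  "qn \<equiv> quot_norm K v"

lemma quot_norm_le: "a \<in> K \<Longrightarrow> qn e \<le> v (e - a)"
  unfolding quot_norm_def by (rule cInf_lower) (auto intro: bdd_belowI[of _ 0])

lemma quot_norm_nonneg: "0 \<le> qn e"
  unfolding quot_norm_def by (rule cInf_greatest) (use K_0 in blast, auto)

lemma quot_norm_lessD: "qn e < r \<Longrightarrow> \<exists>a\<in>K. v (e - a) < r"
  unfolding quot_norm_def
  by (subst (asm) cInf_less_iff) (use K_0 in \<open>blast, auto intro: bdd_belowI[of _ 0]\<close>)

lemma quot_norm_leI: "(\<And>r. m < r \<Longrightarrow> \<exists>a\<in>K. v (e - a) < r) \<Longrightarrow> qn e \<le> m"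
  using quot_norm_le by (meson dense_ge le_less_trans less_imp_le)

lemma quot_norm_of_K: "e \<in> K \<Longrightarrow> qn e = 0"
  using quot_norm_le[of e e] quot_norm_nonneg[of e] by simp

lemma quot_norm_add_le: "qn (a + b) \<le> max (qn a) (qn b)"
proof (rule quot_norm_leI)
  fix r assume "max (qn a) (qn b) < r"
  then obtain a' b' where "a' \<in> K" "v (a - a') < r" "b' \<in> K" "v (b - b') < r"
    using quot_norm_lessD by (meson max.strict_boundedE)
  moreover have "v (a + b - (a' + b')) \<le> max (v (a - a')) (v (b - b'))"
    using v_add_le[of "a - a'" "b - b'"] by (simp add: algebra_simps)
  ultimately show "\<exists>c\<in>K. v (a + b - c) < r"
    using K_add by (intro bexI[of _ "a' + b'"]) auto
qed

lemma quot_norm_add_K: "k \<in> K \<Longrightarrow> qn (e + k) = qn e"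
  using quot_norm_add_le[of e k] quot_norm_add_le[of "e + k" "- k"]
  by (simp add: quot_norm_of_K K_uminus quot_norm_nonneg)

lemma quot_norm_scale_le:
  assumes c: "c \<in> K"
  shows "qn (c * e) \<le> v c * qn e"
proof (rule quot_norm_leI)
  fix r assume r: "v c * qn e < r"
  show "\<exists>a\<in>K. v (c * e - a) < r"
  proof (cases "c = 0")
    case False
    then have "qn e < r / v c" using r v_pos[of c] by (simp add: field_simps)
    then obtain a where "a \<in> K" "v (e - a) < r / v c" using quot_norm_lessD by blast
    moreover have "v (c * e - c * a) = v c * v (e - a)"
      by (simp add: v_mult[symmetric] right_diff_distrib)
    ultimately show ?thesis
      using K_mult[OF c] v_pos[OF False] by (metis pos_less_divide_eq mult.commute)
  qed (use r K_0 in \<open>auto intro!: bexI[of _ 0]\<close>)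
qed

lemma quot_norm_scale: "c \<in> K \<Longrightarrow> qn (c * e) = v c * qn e"
proof (cases "c = 0")
  case False
  assume c: "c \<in> K"
  have "qn e = qn (inverse c * (c * e))" using False by (simp flip: mult.assoc)
  also have "\<dots> \<le> inverse (v c) * qn (c * e)"
    using quot_norm_scale_le[OF K_inverse[OF c]] by (simp add: v_inverse)
  finally have "v c * qn e \<le> qn (c * e)"
    using v_pos[OF False] by (simp add: field_simps)
  then show ?thesis using quot_norm_scale_le[OF c, of e] by simp
qed (simp add: quot_norm_of_K)

lemma quot_norm_uminus: "qn (- e) = qn e"
  using quot_norm_scale[of "-1" e] K_uminus[OF K_1] by simp

lemma exists_inverse_approx:
  assumes "qn u / v u < \<rho>" "qn u < v u"
  shows "\<exists>l\<in>K. v (1 - l * u) < \<rho>"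
proof -
  have u: "0 < v u" using assms(2) quot_norm_nonneg[of u] by linarith
  then have "qn u < min \<rho> 1 * v u"
    using assms by (auto simp: min_def field_simps)
  then obtain a where a: "a \<in> K" "v (u - a) < min \<rho> 1 * v u"
    using quot_norm_lessD by blast
  moreover have "min \<rho> 1 * v u \<le> 1 * v u"
    using u by (intro mult_right_mono) auto
  ultimately have "v (u - (u - a)) = v u"
    by (intro v_diff_eq_left) simp
  then have va: "v a = v u" by simp
  then have "a \<noteq> 0" using u by auto
  then have "v (1 - inverse a * u) = v (u - a) / v u"
    using va by (simp add: field_simps v_divide v_minus_commute)
  also have "\<dots> < min \<rho> 1"
    using a(2) u by (simp only: pos_divide_less_eq)
  finally show ?thesis using K_inverse[OF a(1)] by force
qed

definition bounded_by :: "real \<Rightarrow> 'a set \<Rightarrow> ('a \<Rightarrow> 'a) \<Rightarrow> bool" where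
  "bounded_by t D f \<longleftrightarrow> (\<forall>d\<in>D. v (f d) \<le> t * v d)"

lemma has_SE_of_bounded_extensions:
  assumes ext: "\<And>D f. ksubspace K D \<Longrightarrow> D \<subseteq> E \<Longrightarrow> klinear_fun K D f \<Longrightarrow> bounded_by t D f
      \<Longrightarrow> \<exists>g. klinear_fun K E g \<and> (\<forall>d\<in>D. g d = f d) \<and> bounded_by t E g"
  shows "has_SE K v (\<lambda>z. t * v z) E"
  unfolding has_SE_def
proof (intro allI impI, elim conjE)
  fix D f
  assume D: "ksubspace K D" "D \<subseteq> E" and f: "klinear_fun K D f"
    and norm: "has_opnorm v (\<lambda>z. t * v z) D f 1"
  then obtain g where g: "klinear_fun K E g" "\<forall>d\<in>D. g d = f d" "bounded_by t E g"
    using ext unfolding has_opnorm_def bounded_by_def by force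
  have "has_opnorm v (\<lambda>z. t * v z) E g 1"
    unfolding has_opnorm_def
  proof (intro conjI allI impI)
    show "\<forall>d\<in>E. v (g d) \<le> 1 * (t * v d)"
      using g(3) unfolding bounded_by_def by simp
    fix c assume "\<forall>d\<in>E. v (g d) \<le> c * (t * v d)"
    then have "\<forall>d\<in>D. v (f d) \<le> c * (t * v d)"
      using g(2) D(2) by (metis subsetD)
    then show "1 \<le> c" using norm unfolding has_opnorm_def by blast
  qed
  then show "\<exists>g. klinear_fun K E g \<and> (\<forall>d\<in>D. g d = f d) \<and> has_opnorm v (\<lambda>z. t * v z) E g 1"
    using g(1,2) by blast
qed

lemma bounded_extension_span_insert:
  assumes D: "ksubspace K D" and f: "klinear_fun K D f" and fb: "bounded_by t D f"
    and z: "z \<notin> D" and b: "b \<in> K" and hb: "\<And>d. d \<in> D \<Longrightarrow> v (b - f d) \<le> t * v (z - d)"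
  shows "\<exists>g. klinear_fun K (span_insert D z) g \<and> (\<forall>d\<in>D. g d = f d)
    \<and> bounded_by t (span_insert D z) g"
proof -
  obtain g where g: "klinear_fun K (span_insert D z) g"
    and g_eq: "\<And>d m. d \<in> D \<Longrightarrow> m \<in> K \<Longrightarrow> g (d + m * z) = f d + m * b"
    using klinear_extension_span_insert[OF D f z b] by blast
  have "v (g (d + m * z)) \<le> t * v (d + m * z)" if d: "d \<in> D" and m: "m \<in> K" for d m
  proof (cases "m = 0")
    case True
    then show ?thesis using g_eq[OF d m] fb d unfolding bounded_by_def by simp
  next
    case False
    define c where "c = - inverse m"
    define d' where "d' = c * d"
    have "c \<in> K" unfolding c_def using K_uminus[OF K_inverse[OF m]] .
    then have d': "d' \<in> D" "f d' = c * f d"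
      unfolding d'_def by (simp_all add: ksubspace_scale[OF D] klinear_scale[OF f] d)
    have "v (g (d + m * z)) = v (m * (b - f d'))"
      using g_eq[OF d m] d'(2) False unfolding c_def by (simp add: field_simps)
    also have "\<dots> \<le> v m * (t * v (z - d'))"
      using hb[OF d'(1)] by (simp add: v_mult mult_left_mono)
    also have "\<dots> = t * v (m * (z - d'))" by (simp add: v_mult)
    also have "m * (z - d') = d + m * z"
      unfolding d'_def c_def using False by (simp add: field_simps)
    finally show ?thesis .
  qed
  then have "bounded_by t (span_insert D z) g"
    unfolding bounded_by_def span_insert_def by blast
  moreover have "\<forall>d\<in>D. g d = f d"
    using g_eq[OF _ K_0] by simp
  ultimately show ?thesis using g by blast
qed

text \<open>For each d, compare f (d0 + ls * u) with f (d0 + l * u), l from the first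
  approximation hypothesis: the bound on f controls f (d0 + l * u) - f d, and the second
  hypothesis controls (ls - l) * f u.\<close>

lemma bounded_extension_value:
  assumes D: "ksubspace K D" and f: "klinear_fun K D f" and fb: "bounded_by t D f" and t: "0 \<le> t"
    and u: "u \<in> D" and d0: "d0 \<in> D" and ls: "ls \<in> K" and d: "d \<in> D"
    and approx: "\<exists>l\<in>K. v (z - d0 - l * u) \<le> v (z - d)"
    and approx_ls: "v (f u) * v (z - d0 - ls * u) \<le> t * v u * v (z - d)"
  shows "v (f (d0 + ls * u) - f d) \<le> t * v (z - d)"
proof -
  obtain l where l: "l \<in> K" "v (z - d0 - l * u) \<le> v (z - d)"
    using approx by blast
  have lu: "l * u \<in> D" and lsu: "ls * u \<in> D"
    using ksubspace_scale[OF D] l(1) ls u by auto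
  have e: "d0 + l * u - d \<in> D"
    using ksubspace_diff[OF D ksubspace_add[OF D d0 lu] d] .
  have split: "f (d0 + ls * u) - f d = (ls - l) * f u + f (d0 + l * u - d)"
    using klinear_add[OF f d0 lsu] klinear_scale[OF f ls u] klinear_add[OF f d0 lu]
      klinear_scale[OF f l(1) u] klinear_diff[OF D f ksubspace_add[OF D d0 lu] d]
    by (simp add: algebra_simps)
  have fu: "v (f u) \<le> t * v u"
    using fb u unfolding bounded_by_def by blast
  have "v (d0 + l * u - d) \<le> max (v (z - d)) (v (z - d0 - l * u))"
    using v_diff_le[of "z - d" "z - d0 - l * u"] by (simp add: algebra_simps)
  then have "v (d0 + l * u - d) \<le> v (z - d)"
    using l(2) by simp
  then have "v (f (d0 + l * u - d)) \<le> t * v (z - d)"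
    using fb e t unfolding bounded_by_def by (meson mult_left_mono order_trans)
  moreover have "v ((ls - l) * f u) \<le> t * v (z - d)"
  proof (cases "u = 0")
    case True
    then show ?thesis using klinear_0[OF D f] t by simp
  next
    case False
    have "v ((ls - l) * u) \<le> max (v (z - d0 - l * u)) (v (z - d0 - ls * u))"
      using v_diff_le[of "z - d0 - l * u" "z - d0 - ls * u"] by (simp add: algebra_simps)
    then have "v (f u) * (v (ls - l) * v u) \<le>
        max (v (f u) * v (z - d0 - l * u)) (v (f u) * v (z - d0 - ls * u))"
      by (metis max_mult_distrib_left mult_left_mono v_mult v_nonneg)
    also have "\<dots> \<le> t * v u * v (z - d)"
      using approx_ls mult_mono[OF fu l(2)] t by simp
    finally have "v (ls - l) * v (f u) * v u \<le> t * v (z - d) * v u"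
      by (simp add: algebra_simps)
    then show ?thesis using v_pos[OF False] by (simp add: v_mult)
  qed
  ultimately show ?thesis
    unfolding split using v_add_le[of "(ls - l) * f u" "f (d0 + l * u - d)"] by linarith
qed

end

locale immediate_completion = valued_base_field v K
  for v :: "'a::field \<Rightarrow> real" and K :: "'a set" +
  assumes complete: "complete_in K v" and immediate: "immediate_ext K v"
begin

lemma value_in_value_group:
  assumes "e \<noteq> 0"
  shows "\<exists>a\<in>K. a \<noteq> 0 \<and> v a = v e"
proof -
  have "v e \<in> value_group UNIV v"
    unfolding value_group_def using assms by blast
  then have "v e \<in> value_group K v"
    using immediate unfolding immediate_ext_def by simp
  then show ?thesis
    unfolding value_group_def by force
qed

lemma exists_closer_in_K:
  assumes e: "e \<noteq> 0"
  shows "\<exists>b\<in>K. v (e - b) < v e"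
proof -
  obtain a where a: "a \<in> K" "a \<noteq> 0" "v a = v e"
    using value_in_value_group[OF e] by blast
  have "v (e / a) = 1" using a e by (simp add: v_divide)
  then obtain c where c: "c \<in> K" "v (e / a - c) < 1"
    using immediate unfolding immediate_ext_def by (metis order_refl)
  have "v (e - a * c) = v a * v (e / a - c)"
    using a(2) by (simp add: right_diff_distrib flip: v_mult)
  also have "\<dots> < v a" using c(2) v_pos[OF a(2)] by simp
  finally show ?thesis using a K_mult[OF a(1) c(1)] by auto
qed

lemma quot_norm_less_v: "e \<noteq> 0 \<Longrightarrow> qn e < v e"
  using exists_closer_in_K quot_norm_le by (meson le_less_trans)

lemma not_best_approximation:
  assumes z: "z \<notin> K" and b: "b \<in> K"
  shows "\<exists>k\<in>K. v (z - k) < v (b - k)"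
proof -
  obtain c where c: "c \<in> K" "v (z - b - c) < v (z - b)"
    using exists_closer_in_K[of "z - b"] z b by auto
  then have "v c = v (z - b)"
    using v_diff_eq_left[of "z - b - c" "z - b"] by simp
  then show ?thesis
    using c K_add[OF b c(1)] by (intro bexI[of _ "b + c"]) (simp_all add: algebra_simps)
qed

lemma K_closed:
  assumes s: "\<And>k. s k \<in> K" and lim: "(\<lambda>k. v (e - s k)) \<longlonglongrightarrow> 0"
  shows "e \<in> K"
proof -
  have "\<exists>N. \<forall>m\<ge>N. \<forall>k\<ge>N. v (s m - s k) < \<epsilon>" if "\<epsilon> > 0" for \<epsilon>
  proof -
    obtain N where N: "\<And>k. k \<ge> N \<Longrightarrow> v (e - s k) < \<epsilon>"
      using LIMSEQ_D[OF lim \<open>\<epsilon> > 0\<close>] by auto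
    have "v (s m - s k) \<le> max (v (e - s k)) (v (e - s m))" for m k
      using v_diff_le[of "e - s k" "e - s m"] by simp
    then have "v (s m - s k) < \<epsilon>" if "m \<ge> N" "k \<ge> N" for m k
      using N[OF that(1)] N[OF that(2)] by (meson le_less_trans max_less_iff_conj)
    then show ?thesis by blast
  qed
  then obtain l where l: "l \<in> K" "(\<lambda>k. v (s k - l)) \<longlonglongrightarrow> 0"
    using complete s unfolding complete_in_def by blast
  have "(\<lambda>k. max (v (e - s k)) (v (s k - l))) \<longlonglongrightarrow> max 0 0"
    by (intro tendsto_max lim l(2))
  moreover have "v (e - l) \<le> max (v (e - s k)) (v (s k - l))" for k
    using v_add_le[of "e - s k" "s k - l"] by simp
  ultimately have "v (e - l) \<le> max 0 0"
    using LIMSEQ_le_const by blast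
  then show ?thesis
    using l(1) v_nonneg[of "e - l"] by simp
qed

lemma quot_norm_pos:
  assumes e: "e \<notin> K"
  shows "0 < qn e"
proof (rule ccontr)
  assume "\<not> 0 < qn e"
  then have "qn e < inverse (real (Suc k))" for k
    using quot_norm_nonneg[of e] by simp
  then have "\<forall>k. \<exists>a. a \<in> K \<and> v (e - a) < inverse (real (Suc k))"
    using quot_norm_lessD by blast
  then obtain s where s: "\<And>k. s k \<in> K" "\<And>k. v (e - s k) < inverse (real (Suc k))"
    by (auto dest!: choice)
  have "(\<lambda>k. v (e - s k)) \<longlonglongrightarrow> 0"
    by (rule tendsto_sandwich[OF _ _ tendsto_const LIMSEQ_inverse_real_of_nat])
      (use s(2) in \<open>auto intro!: always_eventually less_imp_le\<close>)
  then show False using K_closed[of s e] s(1) e by blast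
qed

lemma less_of_le_not_in_value_group:
  assumes t: "t \<notin> value_group K v" "0 < t" and c: "c \<in> K" and u: "u \<noteq> 0"
    and le: "v c \<le> t * v u"
  shows "v c < t * v u"
proof (cases "c = 0")
  case False
  obtain a where a: "a \<in> K" "a \<noteq> 0" "v a = v u"
    using value_in_value_group[OF u] by blast
  have "v (c / a) \<noteq> t"
    using t(1) K_divide[OF c a(1)] False a(2) unfolding value_group_def by auto
  then have "v c \<noteq> t * v u"
    using a u v_pos[OF a(2)] by (auto simp: v_divide)
  then show ?thesis using le by simp
qed (use t u v_pos in simp)

lemma not_in_value_group_of_has_SE:
  assumes E: "ksubspace K E" "K \<subseteq> E" and z: "z \<in> E" "z \<notin> K" and t: "0 < t"
    and SE: "has_SE K v (\<lambda>z. t * v z) E"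
  shows "t \<notin> value_group K v"
proof
  assume "t \<in> value_group K v"
  then obtain a where a: "a \<in> K" "a \<noteq> 0" "v a = t"
    unfolding value_group_def by blast
  have "klinear_fun K K ((*) a)"
    unfolding klinear_fun_def using K_mult[OF a(1)] by (simp add: algebra_simps)
  moreover have "has_opnorm v (\<lambda>z. t * v z) K ((*) a) 1"
    unfolding has_opnorm_def using a(3) t by (auto simp: v_mult dest: bspec[OF _ K_1])
  ultimately obtain g where g: "klinear_fun K E g" "\<forall>k\<in>K. g k = a * k"
    and g_norm: "has_opnorm v (\<lambda>z. t * v z) E g 1"
    using SE ksubspace_K E(2) unfolding has_SE_def by blast
  define b where "b = g z / a"
  have b: "b \<in> K"
    unfolding b_def using K_divide[OF klinear_in_K[OF g(1) z(1)] a(1)] .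
  have "v (b - k) \<le> v (z - k)" if k: "k \<in> K" for k
  proof -
    have "g (z - k) = g z - a * k"
      using klinear_diff[OF E(1) g(1) z(1)] E(2) k g(2) by auto
    also have "\<dots> = a * (b - k)"
      unfolding b_def using a(2) by (simp add: field_simps)
    finally have "g (z - k) = a * (b - k)" .
    moreover have "v (g (z - k)) \<le> t * v (z - k)"
      using g_norm ksubspace_diff[OF E(1) z(1)] E(2) k unfolding has_opnorm_def by auto
    ultimately show ?thesis
      using a(3) t by (simp add: v_mult)
  qed
  then show False
    using not_best_approximation[OF z(2) b] by (meson not_le)
qed

text \<open>Here z - d0 can be approximated along K u to any precision above the gap \<sigma>,
  and \<sigma> lies below every distance from z to D. Since t is not a value,
  v (f u) < t * v u, which leaves room to meet the second hypothesis above.\<close>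

lemma exists_bounded_extension_value:
  assumes t: "t \<notin> value_group K v" "0 < t"
    and D: "ksubspace K D" and f: "klinear_fun K D f" and fb: "bounded_by t D f"
    and u: "u \<in> D" and d0: "d0 \<in> D" and \<sigma>: "0 < \<sigma>"
    and gap: "\<And>d. d \<in> D \<Longrightarrow> \<sigma> < v (z - d)"
    and approx: "\<And>\<rho>. \<sigma> < \<rho> \<Longrightarrow> \<exists>l\<in>K. v (z - d0 - l * u) < \<rho>"
  shows "\<exists>b\<in>K. \<forall>d\<in>D. v (b - f d) \<le> t * v (z - d)"
proof -
  obtain ls where ls: "ls \<in> K" "\<And>d. d \<in> D \<Longrightarrow> v (f u) * v (z - d0 - ls * u) \<le> t * v u * v (z - d)"
  proof (cases "f u = 0")
    case True
    then show ?thesis using that[of 0] t(2) by simp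
  next
    case False
    then have "u \<noteq> 0" using klinear_0[OF D f] by auto
    then have "v (f u) < t * v u"
      using less_of_le_not_in_value_group[OF t klinear_in_K[OF f u]] fb u
      unfolding bounded_by_def by blast
    then have "\<sigma> < t * v u * \<sigma> / v (f u)"
      using v_pos[OF False] \<sigma> by (simp add: field_simps)
    then obtain ls where ls: "ls \<in> K" "v (z - d0 - ls * u) < t * v u * \<sigma> / v (f u)"
      using approx by blast
    have "v (f u) * v (z - d0 - ls * u) \<le> t * v u * v (z - d)" if "d \<in> D" for d
    proof -
      have "v (f u) * v (z - d0 - ls * u) \<le> t * v u * \<sigma>"
        using ls(2) v_pos[OF False] by (simp add: field_simps)
      also have "\<dots> \<le> t * v u * v (z - d)"
        using gap[OF that] t(2) by (simp add: less_imp_le mult_left_mono)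
      finally show ?thesis .
    qed
    then show ?thesis using that ls(1) by blast
  qed
  moreover have "\<exists>l\<in>K. v (z - d0 - l * u) \<le> v (z - d)" if "d \<in> D" for d
    using approx[OF gap[OF that]] by (meson less_imp_le)
  ultimately have "\<forall>d\<in>D. v (f (d0 + ls * u) - f d) \<le> t * v (z - d)"
    using bounded_extension_value[OF D f fb _ u d0] t(2) by simp
  moreover have "f (d0 + ls * u) \<in> K"
    using klinear_in_K[OF f] ksubspace_add[OF D d0 ksubspace_scale[OF D ls(1) u]] by blast
  ultimately show ?thesis by blast
qed

end

locale orthogonal_span = immediate_completion v K
  for v :: "'a::field \<Rightarrow> real" and K :: "'a set" +
  fixes n :: nat and x :: "nat \<Rightarrow> 'a"
  assumes n_ge_1: "n \<ge> 1" and orthogonal: "pi_orthogonal K v n x"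
begin

abbreviation E :: "'a set" where
  "E \<equiv> kspan K n x"

text \<open>One index per class of x_1, ..., x_n modulo K, namely the least one; on these
  indices the orthogonality hypothesis applies.\<close>

definition reps :: "nat set" where
  "reps = {i \<in> {1..n}. \<forall>i'\<in>{1..n}. i' < i \<longrightarrow> x i - x i' \<notin> K}"

lemma reps_subset: "reps \<subseteq> {1..n}"
  unfolding reps_def by auto

lemma finite_reps [simp]: "finite reps"
  using reps_subset finite_subset by blast

lemma x_notin_K: "i \<in> {1..n} \<Longrightarrow> x i \<notin> K"
  using orthogonal unfolding pi_orthogonal_def by blast

lemma reps_diff_notin_K:
  assumes "i \<in> reps" "j \<in> reps" "i \<noteq> j"
  shows "x i - x j \<notin> K"
proof -
  have "x i - x j \<in> K \<longleftrightarrow> x j - x i \<in> K"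
    using K_uminus minus_diff_eq by metis
  then show ?thesis
    using assms reps_subset unfolding reps_def by (cases "i < j") auto
qed

lemma exists_rep:
  assumes i: "i \<in> {1..n}"
  shows "\<exists>j\<in>reps. x i - x j \<in> K"
proof -
  define r where "r = (LEAST j. j \<in> {1..n} \<and> x i - x j \<in> K)"
  have r: "r \<in> {1..n}" "x i - x r \<in> K"
    using LeastI[of "\<lambda>j. j \<in> {1..n} \<and> x i - x j \<in> K" i] i unfolding r_def by simp_all
  have "x r - x j \<notin> K" if "j \<in> {1..n}" "j < r" for j
  proof
    assume "x r - x j \<in> K"
    then have "x i - x j \<in> K"
      using K_add[OF r(2)] by fastforce
    then show False
      using Least_le[of "\<lambda>j. j \<in> {1..n} \<and> x i - x j \<in> K" j] that unfolding r_def by simp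
  qed
  then show ?thesis using r unfolding reps_def by blast
qed

lemma reps_nonempty: "reps \<noteq> {}"
  using exists_rep[of 1] n_ge_1 by auto

lemma quot_norm_sum_reps:
  assumes "\<forall>j\<in>reps. c j \<in> K"
  shows "qn (\<Sum>j\<in>reps. c j * x j) = Max ((\<lambda>j. v (c j) * qn (x j)) ` reps)"
proof -
  have "qn (\<Sum>j\<in>reps. c j * x j) = Max ((\<lambda>j. qn (c j * x j)) ` reps)"
    using orthogonal reps_subset reps_nonempty reps_diff_notin_K assms
    unfolding pi_orthogonal_def by blast
  also have "(\<lambda>j. qn (c j * x j)) ` reps = (\<lambda>j. v (c j) * qn (x j)) ` reps"
    using assms quot_norm_scale by (intro image_cong) auto
  finally show ?thesis .
qed

lemma kspan_reps_repr:
  assumes "e \<in> E"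
  shows "\<exists>c0 c. c0 \<in> K \<and> (\<forall>j\<in>reps. c j \<in> K) \<and> e = c0 + (\<Sum>j\<in>reps. c j * x j)"
proof -
  obtain c where c: "\<forall>i\<in>{0..n}. c i \<in> K" "e = c 0 + (\<Sum>i=1..n. c i * x i)"
    using assms unfolding kspan_def by blast
  have "\<forall>i\<in>{1..n}. \<exists>j. j \<in> reps \<and> x i - x j \<in> K"
    using exists_rep by blast
  then obtain r where r: "\<forall>i\<in>{1..n}. r i \<in> reps \<and> x i - x (r i) \<in> K"
    by (auto dest!: bchoice)
  define c0 where "c0 = c 0 + (\<Sum>i=1..n. c i * (x i - x (r i)))"
  define c' where "c' j = (\<Sum>i\<in>{i \<in> {1..n}. r i = j}. c i)" for j
  have "(\<Sum>i=1..n. c i * x (r i)) = (\<Sum>j\<in>reps. \<Sum>i\<in>{i \<in> {1..n}. r i = j}. c i * x (r i))"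
    using r by (subst sum.group) auto
  also have "\<dots> = (\<Sum>j\<in>reps. c' j * x j)"
    unfolding c'_def sum_distrib_right by (rule sum.cong[OF refl], rule sum.cong[OF refl]) simp
  finally have "e = c0 + (\<Sum>j\<in>reps. c' j * x j)"
    unfolding c(2) c0_def by (simp add: right_diff_distrib sum_subtractf)
  moreover have "c0 \<in> K" "\<forall>j\<in>reps. c' j \<in> K"
    unfolding c0_def c'_def using c(1) r by (auto intro!: K_add K_sum K_mult)
  ultimately show ?thesis by blast
qed

lemma sum_reps_in_kspan:
  assumes "c0 \<in> K" "\<forall>j\<in>reps. c j \<in> K"
  shows "c0 + (\<Sum>j\<in>reps. c j * x j) \<in> E"
proof -
  have E: "ksubspace K E" by (rule kspan_ksubspace)
  have "c j * x j \<in> E" if "j \<in> reps" for j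
    using ksubspace_scale[OF E] assms(2) in_kspan reps_subset that by blast
  then have "(\<Sum>j\<in>reps. c j * x j) \<in> E"
    by (rule ksubspace_sum[OF E finite_reps])
  then show ?thesis
    using ksubspace_add[OF E] K_subset_kspan assms(1) by blast
qed

lemma reps_coeffs_unique:
  assumes "c0 \<in> K" "\<forall>j\<in>reps. c j \<in> K" "c0' \<in> K" "\<forall>j\<in>reps. c' j \<in> K"
    and eq: "c0 + (\<Sum>j\<in>reps. c j * x j) = c0' + (\<Sum>j\<in>reps. c' j * x j)"
  shows "c0 = c0'" "\<forall>j\<in>reps. c j = c' j"
proof -
  have "(\<Sum>j\<in>reps. (c j - c' j) * x j) = c0' - c0"
    using eq by (simp add: left_diff_distrib sum_subtractf algebra_simps)
  then have max: "Max ((\<lambda>j. v (c j - c' j) * qn (x j)) ` reps) = 0"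
    using quot_norm_sum_reps[of "\<lambda>j. c j - c' j"] quot_norm_of_K[OF K_diff[OF assms(3,1)]]
      assms(2,4) K_diff by simp
  show "\<forall>j\<in>reps. c j = c' j"
  proof
    fix j assume j: "j \<in> reps"
    then have "v (c j - c' j) * qn (x j) \<le> 0"
      using Max_ge[of "(\<lambda>j. v (c j - c' j) * qn (x j)) ` reps"] max by simp
    moreover have "0 < qn (x j)"
      using quot_norm_pos[OF x_notin_K] reps_subset j by blast
    ultimately have "v (c j - c' j) \<le> 0"
      by (simp add: mult_le_0_iff)
    then show "c j = c' j"
      using v_nonneg[of "c j - c' j"] by simp
  qed
  then have "(\<Sum>j\<in>reps. c j * x j) = (\<Sum>j\<in>reps. c' j * x j)"
    by simp
  then show "c0 = c0'" using eq by simp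
qed

definition coords :: "'a \<Rightarrow> 'a \<times> (nat \<Rightarrow> 'a)" where
  "coords e = (SOME p. fst p \<in> K \<and> (\<forall>j\<in>reps. snd p j \<in> K) \<and> e = fst p + (\<Sum>j\<in>reps. snd p j * x j))"

definition coeff0 :: "'a \<Rightarrow> 'a" where
  "coeff0 e = fst (coords e)"

definition coeff :: "nat \<Rightarrow> 'a \<Rightarrow> 'a" where
  "coeff j e = snd (coords e) j"

lemma coeff0_in_K: "e \<in> E \<Longrightarrow> coeff0 e \<in> K"
  and coeff_in_K: "e \<in> E \<Longrightarrow> j \<in> reps \<Longrightarrow> coeff j e \<in> K"
  and kspan_coeff_repr: "e \<in> E \<Longrightarrow> coeff0 e + (\<Sum>j\<in>reps. coeff j e * x j) = e"
proof -
  assume "e \<in> E"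
  then have "\<exists>p. fst p \<in> K \<and> (\<forall>j\<in>reps. snd p j \<in> K) \<and> e = fst p + (\<Sum>j\<in>reps. snd p j * x j)"
    using kspan_reps_repr by fastforce
  then have "fst (coords e) \<in> K \<and> (\<forall>j\<in>reps. snd (coords e) j \<in> K)
      \<and> e = fst (coords e) + (\<Sum>j\<in>reps. snd (coords e) j * x j)"
    unfolding coords_def by (rule someI_ex)
  then show "coeff0 e \<in> K" "j \<in> reps \<Longrightarrow> coeff j e \<in> K"
    "coeff0 e + (\<Sum>j\<in>reps. coeff j e * x j) = e"
    unfolding coeff0_def coeff_def by simp_all
qed

lemma coeff_eq:
  assumes "c0 \<in> K" "\<forall>j\<in>reps. c j \<in> K"
  shows "coeff0 (c0 + (\<Sum>j\<in>reps. c j * x j)) = c0"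
    and "j \<in> reps \<Longrightarrow> coeff j (c0 + (\<Sum>j\<in>reps. c j * x j)) = c j"
proof -
  let ?e = "c0 + (\<Sum>j\<in>reps. c j * x j)"
  have e: "?e \<in> E" by (rule sum_reps_in_kspan[OF assms])
  have "\<forall>j\<in>reps. coeff j ?e \<in> K"
    using coeff_in_K[OF e] by blast
  note unique = reps_coeffs_unique[OF coeff0_in_K[OF e] this assms kspan_coeff_repr[OF e]]
  show "coeff0 ?e = c0" "j \<in> reps \<Longrightarrow> coeff j ?e = c j"
    using unique by simp_all
qed

lemma klinear_coeff:
  assumes j: "j \<in> reps"
  shows "klinear_fun K E (coeff j)"
  unfolding klinear_fun_def
proof (intro conjI ballI)
  fix a b assume ab: "a \<in> E" "b \<in> E"
  have "(coeff0 a + coeff0 b) + (\<Sum>j\<in>reps. (coeff j a + coeff j b) * x j)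
      = (coeff0 a + (\<Sum>j\<in>reps. coeff j a * x j)) + (coeff0 b + (\<Sum>j\<in>reps. coeff j b * x j))"
    by (simp add: distrib_right sum.distrib algebra_simps)
  also have "\<dots> = a + b"
    using kspan_coeff_repr ab by simp
  finally have "coeff j (a + b) = coeff j ((coeff0 a + coeff0 b) + (\<Sum>j\<in>reps. (coeff j a + coeff j b) * x j))"
    by simp
  also have "\<dots> = coeff j a + coeff j b"
    using coeff_eq(2) j ab coeff0_in_K coeff_in_K K_add by simp
  finally show "coeff j (a + b) = coeff j a + coeff j b" .
next
  fix c a assume ca: "c \<in> K" "a \<in> E"
  have "c * coeff0 a + (\<Sum>j\<in>reps. (c * coeff j a) * x j) = c * (coeff0 a + (\<Sum>j\<in>reps. coeff j a * x j))"
    by (simp add: distrib_left sum_distrib_left mult.assoc)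
  also have "\<dots> = c * a"
    using kspan_coeff_repr ca by simp
  finally have "coeff j (c * a) = coeff j (c * coeff0 a + (\<Sum>j\<in>reps. (c * coeff j a) * x j))"
    by simp
  also have "\<dots> = c * coeff j a"
    using coeff_eq(2) j ca coeff0_in_K coeff_in_K K_mult by simp
  finally show "coeff j (c * a) = c * coeff j a" .
qed (use coeff_in_K j in blast)

lemma coeff_of_K: "k \<in> K \<Longrightarrow> j \<in> reps \<Longrightarrow> coeff j k = 0"
  using coeff_eq(2)[of k "\<lambda>_. 0"] by simp

lemma quot_norm_kspan:
  assumes "e \<in> E"
  shows "qn e = Max ((\<lambda>j. v (coeff j e) * qn (x j)) ` reps)"
proof -
  have "qn e = qn ((\<Sum>j\<in>reps. coeff j e * x j) + coeff0 e)"
    using kspan_coeff_repr[OF assms] by (simp add: add.commute)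
  also have "\<dots> = Max ((\<lambda>j. v (coeff j e) * qn (x j)) ` reps)"
    using quot_norm_add_K[OF coeff0_in_K[OF assms]] quot_norm_sum_reps coeff_in_K[OF assms] by simp
  finally show ?thesis .
qed

lemma coeff_quot_norm_le: "e \<in> E \<Longrightarrow> j \<in> reps \<Longrightarrow> v (coeff j e) * qn (x j) \<le> qn e"
  using quot_norm_kspan by simp

lemma in_K_of_coeffs_0:
  assumes "e \<in> E" "\<forall>j\<in>reps. coeff j e = 0"
  shows "e \<in> K"
  using kspan_coeff_repr[OF assms(1)] coeff0_in_K[OF assms(1)] assms(2) by simp

definition is_pivot :: "nat \<Rightarrow> 'a \<Rightarrow> bool" where
  "is_pivot j u \<longleftrightarrow> j \<in> reps \<and> u \<in> E \<and> coeff j u = 1 \<and> qn u \<le> qn (x j)"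

lemma exists_pivot:
  assumes D: "ksubspace K D" "D \<subseteq> E" and d: "d \<in> D" "d \<notin> K"
  shows "\<exists>j u. u \<in> D \<and> is_pivot j u"
proof -
  define F where "F j = v (coeff j d) * qn (x j)" for j
  have "Max (F ` reps) \<in> F ` reps"
    using reps_nonempty by (intro Max_in) auto
  then obtain j where j: "j \<in> reps" "F j = Max (F ` reps)"
    by (metis imageE)
  have dE: "d \<in> E" using d(1) D(2) by blast
  obtain j0 where j0: "j0 \<in> reps" "coeff j0 d \<noteq> 0"
    using in_K_of_coeffs_0[OF dE] d(2) by blast
  have "0 < F j0"
    unfolding F_def using v_pos[OF j0(2)] quot_norm_pos[OF x_notin_K] reps_subset j0(1) by auto
  also have "F j0 \<le> F j" using j j0(1) by simp
  finally have cj: "coeff j d \<noteq> 0" unfolding F_def by auto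
  define c where "c = inverse (coeff j d)"
  have c: "c \<in> K" unfolding c_def using K_inverse[OF coeff_in_K[OF dE j(1)]] .
  have "qn (c * d) = v c * F j"
    using quot_norm_scale[OF c] quot_norm_kspan[OF dE] j(2) unfolding F_def by simp
  also have "\<dots> = qn (x j)"
    unfolding F_def c_def using cj by (simp add: v_inverse)
  finally have "is_pivot j (c * d)"
    unfolding is_pivot_def c_def using j(1) cj dE klinear_scale[OF klinear_coeff[OF j(1)] c dE]
      ksubspace_scale[OF kspan_ksubspace c] by (simp add: c_def)
  then show ?thesis using ksubspace_scale[OF D(1) c d(1)] by blast
qed

lemma pivot_notin_K: "is_pivot j u \<Longrightarrow> u \<notin> K"
  unfolding is_pivot_def using coeff_of_K by force

lemma pivot_reduce:
  assumes u: "is_pivot j u" and e: "e \<in> E"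
  shows "coeff j (e - coeff j e * u) = 0"
    and "qn (coeff j e * u) \<le> qn e"
    and "qn (e - coeff j e * u) \<le> qn e"
proof -
  have j: "j \<in> reps" and uE: "u \<in> E" and cu: "coeff j u = 1" and qu: "qn u \<le> qn (x j)"
    using u unfolding is_pivot_def by auto
  have k: "coeff j e \<in> K" by (rule coeff_in_K[OF e j])
  have E: "ksubspace K E" by (rule kspan_ksubspace)
  show "coeff j (e - coeff j e * u) = 0"
    using klinear_diff[OF E klinear_coeff[OF j] e ksubspace_scale[OF E k uE]]
      klinear_scale[OF klinear_coeff[OF j] k uE] cu by simp
  have "qn (coeff j e * u) = v (coeff j e) * qn u"
    by (rule quot_norm_scale[OF k])
  also have "\<dots> \<le> v (coeff j e) * qn (x j)"
    using qu by (simp add: mult_left_mono)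
  also have "\<dots> \<le> qn e"
    by (rule coeff_quot_norm_le[OF e j])
  finally show le: "qn (coeff j e * u) \<le> qn e" .
  have "qn (e + - (coeff j e * u)) \<le> max (qn e) (qn (- (coeff j e * u)))"
    by (rule quot_norm_add_le)
  then show "qn (e - coeff j e * u) \<le> qn e"
    using le by (simp add: quot_norm_uminus)
qed

lemma pivot_reduce_diff:
  assumes u: "is_pivot j u" and a: "a \<in> E" and d: "d \<in> E"
  shows "qn ((a - coeff j a * u) - (d - coeff j d * u)) \<le> qn (a - d)"
proof -
  have E: "ksubspace K E" and j: "j \<in> reps"
    using kspan_ksubspace u unfolding is_pivot_def by auto
  have ce: "coeff j (a - d) = coeff j a - coeff j d"
    by (rule klinear_diff[OF E klinear_coeff[OF j] a d])
  have "(a - coeff j a * u) - (d - coeff j d * u) = (a - d) - coeff j (a - d) * u"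
    unfolding ce by (simp add: algebra_simps)
  also have "qn \<dots> \<le> qn (a - d)"
    by (rule pivot_reduce(3)[OF u ksubspace_diff[OF E a d]])
  finally show ?thesis .
qed

lemma kspan_subspace_induct [consumes 2, case_names subset_K pivot]:
  assumes "ksubspace K D" "D \<subseteq> E"
    and subset_K: "\<And>D. ksubspace K D \<Longrightarrow> D \<subseteq> E \<Longrightarrow> D \<subseteq> K \<Longrightarrow> P D"
    and pivot: "\<And>D j u. ksubspace K D \<Longrightarrow> D \<subseteq> E \<Longrightarrow> u \<in> D \<Longrightarrow> is_pivot j u
      \<Longrightarrow> P {d \<in> D. coeff j d = 0} \<Longrightarrow> P D"
  shows "P D"
  using assms(1,2)
proof (induction "card {j \<in> reps. \<exists>d\<in>D. coeff j d \<noteq> 0}" arbitrary: D rule: less_induct)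
  case less
  show ?case
  proof (cases "D \<subseteq> K")
    case False
    then obtain j u where u: "u \<in> D" "is_pivot j u"
      using exists_pivot[OF less.prems] by blast
    let ?D1 = "{d \<in> D. coeff j d = 0}"
    have j: "j \<in> reps" and cu: "coeff j u = 1"
      using u(2) unfolding is_pivot_def by auto
    have D1: "ksubspace K ?D1" "?D1 \<subseteq> E"
      using ksubspace_kernel[OF less.prems(1) kspan_ksubspace less.prems(2) klinear_coeff[OF j]]
        less.prems(2) by auto
    have "{j' \<in> reps. \<exists>d\<in>?D1. coeff j' d \<noteq> 0} \<subset> {j' \<in> reps. \<exists>d\<in>D. coeff j' d \<noteq> 0}"
      using u(1) j cu by force
    then have "card {j' \<in> reps. \<exists>d\<in>?D1. coeff j' d \<noteq> 0} < card {j' \<in> reps. \<exists>d\<in>D. coeff j' d \<noteq> 0}"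
      by (simp add: psubset_card_mono)
    then show ?thesis
      using pivot[OF less.prems u] less.hyps D1 by blast
  qed (use subset_K less.prems in blast)
qed

lemma quot_norm_dist_attains_min:
  assumes "ksubspace K D" "D \<subseteq> E" "a \<in> E"
  shows "\<exists>d0\<in>D. \<forall>d\<in>D. qn (a - d0) \<le> qn (a - d)"
proof -
  have "\<forall>a\<in>E. \<exists>d0\<in>D. \<forall>d\<in>D. qn (a - d0) \<le> qn (a - d)"
    using assms(1,2)
  proof (induction rule: kspan_subspace_induct)
    case (subset_K D)
    have "qn (a - d) = qn (a - 0)" if "d \<in> D" for a d
      using quot_norm_add_K[of "- d" a] K_uminus that subset_K(3) by auto
    then show ?case using ksubspace_0[OF subset_K(1)] by fastforce
  next
    case (pivot D j u)
    let ?D1 = "{d \<in> D. coeff j d = 0}"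
    have E: "ksubspace K E" and j: "j \<in> reps" and uE: "u \<in> E"
      using kspan_ksubspace pivot(4) unfolding is_pivot_def by auto
    show ?case
    proof
      fix a assume a: "a \<in> E"
      define a' where "a' = a - coeff j a * u"
      have "a' \<in> E"
        unfolding a'_def using ksubspace_diff[OF E a ksubspace_scale[OF E coeff_in_K[OF a j] uE]] .
      then obtain d1 where d1: "d1 \<in> ?D1" "\<And>d. d \<in> ?D1 \<Longrightarrow> qn (a' - d1) \<le> qn (a' - d)"
        using pivot(5) by blast
      have "qn (a - (coeff j a * u + d1)) \<le> qn (a - d)" if d: "d \<in> D" for d
      proof -
        have dE: "d \<in> E" using d pivot(2) by blast
        have "d - coeff j d * u \<in> ?D1"
          using pivot_reduce(1)[OF pivot(4) dE] d
            ksubspace_diff[OF pivot(1) d ksubspace_scale[OF pivot(1) coeff_in_K[OF dE j] pivot(3)]]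
          by simp
        then have "qn (a' - d1) \<le> qn (a' - (d - coeff j d * u))"
          using d1(2) by blast
        also have "\<dots> \<le> qn (a - d)"
          unfolding a'_def by (rule pivot_reduce_diff[OF pivot(4) a dE])
        finally show ?thesis unfolding a'_def by (simp add: algebra_simps)
      qed
      moreover have "coeff j a * u + d1 \<in> D"
        using ksubspace_add[OF pivot(1) ksubspace_scale[OF pivot(1) coeff_in_K[OF a j] pivot(3)]] d1(1)
        by simp
      ultimately show "\<exists>d0\<in>D. \<forall>d\<in>D. qn (a - d0) \<le> qn (a - d)" by blast
    qed
  qed
  then show ?thesis using assms(3) by blast
qed

lemma ratio_le_pivot_max:
  assumes u: "is_pivot j u" and d: "d \<in> E" "d \<notin> K"
    and d': "d - coeff j d * u \<in> K \<Longrightarrow> d - coeff j d * u = 0"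
  shows "v d / qn d \<le> max (v u / qn u) (v (d - coeff j d * u) / qn (d - coeff j d * u))"
proof -
  define k where "k = coeff j d"
  define d' where "d' = d - k * u"
  have j: "j \<in> reps" and uK: "u \<notin> K"
    using u pivot_notin_K unfolding is_pivot_def by auto
  have k: "k \<in> K" unfolding k_def using coeff_in_K[OF d(1) j] .
  have "v d \<le> max (v (k * u)) (v d')"
    unfolding d'_def using v_add_le[of "k * u" "d - k * u"] by simp
  then consider "v d \<le> v (k * u)" | "v d \<le> v d'" by linarith
  then show ?thesis
  proof cases
    case 1
    moreover have "d \<noteq> 0" using d(2) K_0 by blast
    ultimately have "k \<noteq> 0" using v_pos[of d] by auto
    then have "k * u \<notin> K"
      using uK K_mult[OF K_inverse[OF k], of "k * u"] by (auto simp: mult.assoc[symmetric])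
    then have "v d / qn d \<le> v (k * u) / qn (k * u)"
      using frac_le[OF v_nonneg 1 quot_norm_pos] pivot_reduce(2)[OF u d(1)] unfolding k_def by blast
    also have "\<dots> = v u / qn u"
      using quot_norm_scale[OF k] v_pos[OF \<open>k \<noteq> 0\<close>] \<open>k \<noteq> 0\<close> by (simp add: v_mult)
    finally show ?thesis by simp
  next
    case 2
    then have "d' \<notin> K" using d' v_pos[of d] d(2) unfolding d'_def k_def by force
    then have "v d / qn d \<le> v d' / qn d'"
      using frac_le[OF v_nonneg 2 quot_norm_pos] pivot_reduce(3)[OF u d(1)] unfolding d'_def k_def by blast
    then show ?thesis unfolding d'_def k_def by simp
  qed
qed

lemma ratio_attains_max:
  assumes "ksubspace K D" "D \<subseteq> E" "\<And>d. d \<in> D \<Longrightarrow> d \<in> K \<Longrightarrow> d = 0"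
    and "\<exists>d\<in>D. d \<noteq> 0"
  shows "\<exists>u\<in>D. u \<noteq> 0 \<and> (\<forall>d\<in>D. d \<noteq> 0 \<longrightarrow> v d / qn d \<le> v u / qn u)"
  using assms
proof (induction rule: kspan_subspace_induct)
  case (subset_K D)
  then show ?case by blast
next
  case (pivot D j u1)
  let ?D1 = "{d \<in> D. coeff j d = 0}"
  have u1: "u1 \<noteq> 0" using pivot_notin_K[OF pivot(4)] by auto
  obtain u where u: "u \<in> D" "u \<noteq> 0" "v u1 / qn u1 \<le> v u / qn u"
    and u_D1: "\<And>d. d \<in> ?D1 \<Longrightarrow> d \<noteq> 0 \<Longrightarrow> v d / qn d \<le> v u / qn u"
  proof (cases "\<exists>d\<in>?D1. d \<noteq> 0")
    case True
    then obtain u' where u': "u' \<in> ?D1" "u' \<noteq> 0" "\<forall>d\<in>?D1. d \<noteq> 0 \<longrightarrow> v d / qn d \<le> v u' / qn u'"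
      using pivot.IH pivot.prems(1) by blast
    show ?thesis
      using that[of u1] that[of u'] u' pivot(3) u1 by (cases "v u' / qn u' \<le> v u1 / qn u1") force+
  qed (use pivot(3) u1 that in blast)
  have "v d / qn d \<le> v u / qn u" if d: "d \<in> D" "d \<noteq> 0" for d
  proof -
    have dE: "d \<in> E" using d pivot(2) by blast
    have d': "d - coeff j d * u1 \<in> ?D1"
      using pivot_reduce(1)[OF pivot(4) dE] d ksubspace_diff[OF pivot(1) d(1)
          ksubspace_scale[OF pivot(1) coeff_in_K[OF dE] pivot(3)]] pivot(4)
      unfolding is_pivot_def by simp
    have "v (d - coeff j d * u1) / qn (d - coeff j d * u1) \<le> v u / qn u"
      using u_D1[OF d'] u(3) v_nonneg quot_norm_nonneg
      by (cases "d - coeff j d * u1 = 0") (auto intro: order_trans[OF divide_nonneg_nonneg])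
    moreover have "v d / qn d \<le> max (v u1 / qn u1) (v (d - coeff j d * u1) / qn (d - coeff j d * u1))"
      using ratio_le_pivot_max[OF pivot(4) dE] pivot.prems(1) d d' by blast
    ultimately show ?thesis using u(3) by linarith
  qed
  then show ?case using u(1,2) by blast
qed

lemma exists_extension_value_if_one_in:
  assumes t: "t \<notin> value_group K v" "0 < t"
    and D: "ksubspace K D" "D \<subseteq> E" and f: "klinear_fun K D f" "bounded_by t D f"
    and one: "1 \<in> D" and z: "z \<in> E" "z \<notin> D"
  shows "\<exists>b\<in>K. \<forall>d\<in>D. v (b - f d) \<le> t * v (z - d)"
proof -
  obtain d0 where d0: "d0 \<in> D" "\<And>d. d \<in> D \<Longrightarrow> qn (z - d0) \<le> qn (z - d)"
    using quot_norm_dist_attains_min[OF D z(1)] by blast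
  have KD: "K \<subseteq> D"
    using ksubspace_scale[OF D(1) _ one] by auto
  have "z - d0 \<notin> K"
    using ksubspace_add[OF D(1) _ d0(1), of "z - d0"] KD z(2) by auto
  then have "0 < qn (z - d0)" by (rule quot_norm_pos)
  moreover have "qn (z - d0) < v (z - d)" if "d \<in> D" for d
    using d0(2)[OF that] quot_norm_less_v[of "z - d"] z(2) that by fastforce
  moreover have "\<exists>l\<in>K. v (z - d0 - l * 1) < \<rho>" if "qn (z - d0) < \<rho>" for \<rho>
    using quot_norm_lessD[OF that] by simp
  ultimately show ?thesis
    using exists_bounded_extension_value[OF t D(1) f one d0(1)] by blast
qed

lemma exists_extension_value_at_one:
  assumes t: "t \<notin> value_group K v" "0 < t"
    and D: "ksubspace K D" "D \<subseteq> E" and f: "klinear_fun K D f" "bounded_by t D f"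
    and one: "1 \<notin> D"
  shows "\<exists>b\<in>K. \<forall>d\<in>D. v (b - f d) \<le> t * v (1 - d)"
proof (cases "\<exists>d\<in>D. d \<noteq> 0")
  case False
  then show ?thesis using klinear_0[OF D(1) f(1)] t(2) by (intro bexI[of _ 0]) auto
next
  case True
  have DK: "d = 0" if "d \<in> D" "d \<in> K" for d
    using ksubspace_scale[OF D(1) K_inverse[OF that(2)] that(1)] one by (cases "d = 0") auto
  obtain u where u: "u \<in> D" "u \<noteq> 0" "\<And>d. d \<in> D \<Longrightarrow> d \<noteq> 0 \<Longrightarrow> v d / qn d \<le> v u / qn u"
    using ratio_attains_max[OF D DK True] by blast
  have qu: "0 < qn u" "qn u < v u"
    using quot_norm_pos quot_norm_less_v[OF u(2)] DK u(1,2) by blast+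
  have gap: "qn u / v u < v (1 - d)" if d: "d \<in> D" for d
  proof (cases "v (1 - d) < 1")
    case True
    then have vd: "v d = 1" using v_diff_eq_left[of "1 - d" 1] by simp
    then have "d \<noteq> 0" by auto
    then have qd: "0 < qn d" using quot_norm_pos DK d by blast
    have "qn u / v u \<le> qn d"
      using u(3)[OF d \<open>d \<noteq> 0\<close>] vd qd qu by (simp add: field_simps)
    also have "qn d = qn (1 - d)"
      using quot_norm_add_K[of 1 "- d"] quot_norm_uminus[of d] by simp
    also have "\<dots> < v (1 - d)"
      using one d by (intro quot_norm_less_v) auto
    finally show ?thesis .
  next
    case False
    have "qn u / v u < 1" using qu by simp
    then show ?thesis using False by linarith
  qed
  have approx: "\<exists>l\<in>K. v (1 - 0 - l * u) < \<rho>" if "qn u / v u < \<rho>" for \<rho>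
    using exists_inverse_approx[OF that qu(2)] by simp
  have "0 < qn u / v u" using qu by simp
  from exists_bounded_extension_value[OF t D(1) f u(1) ksubspace_0[OF D(1)] this gap approx]
  show ?thesis .
qed

definition generators :: "'a set" where
  "generators = insert 1 (x ` reps)"

lemma generators_subset_kspan: "generators \<subseteq> E"
  unfolding generators_def using K_subset_kspan K_1 in_kspan reps_subset by blast

lemma kspan_subset_if_generators_in:
  assumes D: "ksubspace K D" and gens: "generators \<subseteq> D"
  shows "E \<subseteq> D"
proof
  fix e assume e: "e \<in> E"
  have "coeff0 e * 1 \<in> D"
    using ksubspace_scale[OF D coeff0_in_K[OF e]] gens unfolding generators_def by blast
  moreover have "(\<Sum>j\<in>reps. coeff j e * x j) \<in> D"
    using ksubspace_scale[OF D coeff_in_K[OF e]] gens unfolding generators_def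
    by (intro ksubspace_sum[OF D]) auto
  ultimately show "e \<in> D"
    using ksubspace_add[OF D] kspan_coeff_repr[OF e] by force
qed

lemma exists_extension_value_at_generator:
  assumes t: "t \<notin> value_group K v" "0 < t"
    and D: "ksubspace K D" "D \<subseteq> E" and f: "klinear_fun K D f" "bounded_by t D f"
    and gens: "\<not> generators \<subseteq> D"
  shows "\<exists>z\<in>generators. z \<notin> D \<and> (\<exists>b\<in>K. \<forall>d\<in>D. v (b - f d) \<le> t * v (z - d))"
proof (cases "1 \<in> D")
  case True
  then obtain z where "z \<in> generators" "z \<notin> D" using gens by blast
  moreover from this have "z \<in> E" using generators_subset_kspan by blast
  ultimately show ?thesis
    using exists_extension_value_if_one_in[OF t D f True] by blast
next
  case False
  then show ?thesis
    using exists_extension_value_at_one[OF t D f] unfolding generators_def by blast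
qed

lemma bounded_extension_to_kspan:
  assumes t: "t \<notin> value_group K v" "0 < t"
  shows "ksubspace K D \<Longrightarrow> D \<subseteq> E \<Longrightarrow> klinear_fun K D f \<Longrightarrow> bounded_by t D f
    \<Longrightarrow> \<exists>g. klinear_fun K E g \<and> (\<forall>d\<in>D. g d = f d) \<and> bounded_by t E g"
proof (induction "card {z \<in> generators. z \<notin> D}" arbitrary: D f rule: less_induct)
  case less
  note D = less.prems(1,2) and f = less.prems(3,4)
  show ?case
  proof (cases "generators \<subseteq> D")
    case True
    then have "D = E" using kspan_subset_if_generators_in[OF D(1)] D(2) by blast
    then show ?thesis using f by blast
  next
    case False
    then obtain z b where z: "z \<in> generators" "z \<notin> D"
      and b: "b \<in> K" "\<forall>d\<in>D. v (b - f d) \<le> t * v (z - d)"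
      using exists_extension_value_at_generator[OF t D f] by blast
    define W where "W = span_insert D z"
    obtain g1 where g1: "klinear_fun K W g1" "\<forall>d\<in>D. g1 d = f d" "bounded_by t W g1"
      using bounded_extension_span_insert[OF D(1) f z(2) b(1)] b(2) unfolding W_def by blast
    have W: "ksubspace K W" "D \<subseteq> W" "W \<subseteq> E"
      unfolding W_def using span_insert_ksubspace[OF D(1)] subset_span_insert
        span_insert_subset[OF kspan_ksubspace D(2)] z(1) generators_subset_kspan by blast+
    have "{y \<in> generators. y \<notin> W} \<subset> {y \<in> generators. y \<notin> D}"
      using W(2) in_span_insert[OF D(1), of z] z unfolding W_def by blast
    then have "card {y \<in> generators. y \<notin> W} < card {y \<in> generators. y \<notin> D}"
      by (simp add: psubset_card_mono generators_def)
    then obtain g where "klinear_fun K E g" "\<forall>w\<in>W. g w = g1 w" "bounded_by t E g"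
      using less.hyps[OF _ W(1,3) g1(1,3)] by blast
    then show ?thesis using g1(2) W(2) by (intro exI[of _ g]) auto
  qed
qed

theorem has_SE_iff_not_in_value_group:
  assumes t: "0 < t"
  shows "has_SE K v (\<lambda>z. t * v z) E \<longleftrightarrow> t \<notin> value_group K v"
proof
  have "x 1 \<in> E" "x 1 \<notin> K"
    using in_kspan x_notin_K n_ge_1 by auto
  then show "has_SE K v (\<lambda>z. t * v z) E \<Longrightarrow> t \<notin> value_group K v"
    by (rule not_in_value_group_of_has_SE[OF kspan_ksubspace K_subset_kspan _ _ t])
next
  assume "t \<notin> value_group K v"
  from bounded_extension_to_kspan[OF this t]
  show "has_SE K v (\<lambda>z. t * v z) E"
    by (rule has_SE_of_bounded_extensions)
qed

end

theorem mainTheorem11: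
  fixes v :: "'a::field \<Rightarrow> real" and K :: "'a set" and x :: "nat \<Rightarrow> 'a"
    and n :: nat and t :: real
  assumes "nonarch_abs v" and "subfield K" and "complete_in K v"
    and "nontrivially_valued K v" and "\<not> sph_complete_in K v"
    and "sph_complete_in UNIV v" and "immediate_ext K v"
    and "n \<ge> 1" and "\<forall>i\<in>{1..n}. x i \<notin> K" and "t > 0"
    and "pi_orthogonal K v n x"
  shows "has_SE K v (\<lambda>z. t * v z) (kspan K n x) \<longleftrightarrow> t \<notin> value_group K v"
proof -
  interpret orthogonal_span v K n x
    by unfold_locales (use assms in auto)
  show ?thesis by (rule has_SE_iff_not_in_value_group) fact
qed

end
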